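(* Let $\boldsymbol\nu=\{\nu_t\}_{t>0}$ be a measurable factorizing family over $[0,1]\times\{\ast\}$. Fix $s,t>0$ and for $\lambda>0$ put $u=\lambda(s+t)$, $u_1=\lambda s$, $u_2=\lambda t$, and $\sigma_{u_1,u_2}:=(\nu_{u_1}\otimes\nu_{u_2})\circ\oplus_{u_1,u_2}^{-1}$ on $\mathscr C_u^{\{\ast\}}$. Let $E_{00}=\{\varnothing\}$, $E_{10}=\{Z\cap[0,u_1]\neq\varnothing,\ Z\cap[u_1,u]=\varnothing\}$, $E_{01}=\{Z\cap[0,u_1]=\varnothing,\ Z\cap[u_1,u]\neq\varnothing\}$, $E_{11}=\{Z\cap[0,u_1]\neq\varnothing,\ Z\cap[u_1,u]\neq\varnothing\}$. Assume that as $\lambda\downarrow0$: (i) $\nu_u(Z\neq\varnothing)=O(u)$ and $\nu_{u_i}(Z\neq\varnothing)=O(u_i)$ for $i=1,2$; (ii) $\nu_u(E_{11})=O(u^2)$; (iii) $|\nu_u(\{\varnothing\})-\nu_{u_1}(\{\varnothing\})\nu_{u_2}(\{\varnothing\})|=O(u^2)$; (iv) $d_{\mathrm{Hell}}^2(\nu_u|_{E_{10}},\sigma_{u_1,u_2}|_{E_{10}})=O(u^2)$ and $d_{\mathrm{Hell}}^2(\nu_u|_{E_{01}},\sigma_{u_1,u_2}|_{E_{01}})=O(u^2)$. Then $1-H(\nu_u,\sigma_{u_1,u_2})=O(u^2)$.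
   Context: $\mathscr C_t^{\{\ast\}}$ is the space of closed subsets of $[0,t]$ with Borel $\sigma$-field $\Sigma_t$ of the Fell topology; $\oplus_{s,t}(Z_1,Z_2)=Z_1\cup(s+Z_2)$; $\sigma_t(Z)=\{r/t:r\in Z\}$. A measurable factorizing family over $[0,1]\times\{\ast\}$ is a family of probability measures $\nu_t$ on $\mathscr C_t^{\{\ast\}}$ with: (i) $\nu_{s+t}$ and $(\nu_s\otimes\nu_t)\circ\oplus_{s,t}^{-1}$ mutually absolutely continuous; (ii) $\nu_t(\{Z:r\in Z\})=0$ for all $r\in[0,t]$; (iii) no $\nu_t$ supported on finitely many atoms; (iv a) a countable ring $\mathcal R\subset\Sigma_1$ generating $\Sigma_1$ with $t\mapsto(\sigma_t)_*\nu_t(A)$ Borel for $A\in\mathcal R$; (iv b) a Borel $\Delta$ on $(0,\infty)^2\times\mathscr C_1^{\{\ast\}}$ with $\Delta(s,t,\sigma_{s+t}(Z))=d((\nu_s\otimes\nu_t)\circ\oplus_{s,t}^{-1})/d\nu_{s+t}(Z)$ a.e. For finite measures $\rho,\eta$ on a measurable space $X$ dominated by a finite measure $m$: $H(\rho,\eta)=\int\sqrt{(d\rho/dm)(d\eta/dm)}\,dm$ and $d^2_{\mathrm{Hell}}(\rho,\eta)=\rho(X)+\eta(X)-2H(\rho,\eta)$. $\rho|_E$ denotes the restriction $\rho(\cdot\cap E)$. *)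

theory Defs
  imports "HOL-Probability.Probability" "HOL-Library.Landau_Symbols"
begin

definition Cspace :: "real \<Rightarrow> real set set" where
  "Cspace t = {Z. closed Z \<and> Z \<subseteq> {0..t}}"

definition fell_topology :: "real \<Rightarrow> real set topology" where
  "fell_topology t = subtopology
     (topology_generated_by
        ({{F. F \<inter> K = {}} | K. compact K} \<union> {{F. F \<inter> G \<noteq> {}} | G. open G}))
     (Cspace t)"

definition borel_of_top :: "'a topology \<Rightarrow> 'a measure" where
  "borel_of_top T = sigma (topspace T) {U. openin T U}"

definition Cmeas :: "real \<Rightarrow> real set measure" where
  "Cmeas t = borel_of_top (fell_topology t)"

definition oplus :: "real \<Rightarrow> real \<Rightarrow> real set \<times> real set \<Rightarrow> real set" where
  "oplus s t = (\<lambda>(Z1, Z2). Z1 \<union> (\<lambda>r. s + r) ` Z2)"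

definition scaleC :: "real \<Rightarrow> real set \<Rightarrow> real set" where
  "scaleC t Z = (\<lambda>r. r / t) ` Z"

definition conv_meas :: "(real \<Rightarrow> real set measure) \<Rightarrow> real \<Rightarrow> real \<Rightarrow> real set measure" where
  "conv_meas \<nu> s t = distr (\<nu> s \<Otimes>\<^sub>M \<nu> t) (Cmeas (s + t)) (oplus s t)"

definition measurable_factorizing_family :: "(real \<Rightarrow> real set measure) \<Rightarrow> bool" where
  "measurable_factorizing_family \<nu> \<longleftrightarrow>
     (\<forall>t>0. prob_space (\<nu> t) \<and> sets (\<nu> t) = sets (Cmeas t) \<and> space (\<nu> t) = space (Cmeas t))
   \<and> (\<forall>s>0. \<forall>t>0. absolutely_continuous (\<nu> (s + t)) (conv_meas \<nu> s t)
                   \<and> absolutely_continuous (conv_meas \<nu> s t) (\<nu> (s + t)))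
   \<and> (\<forall>t>0. \<forall>r\<in>{0..t}. emeasure (\<nu> t) {Z \<in> space (\<nu> t). r \<in> Z} = 0)
   \<and> (\<forall>t>0. \<not> (\<exists>F. finite F \<and> F \<subseteq> space (\<nu> t) \<and> emeasure (\<nu> t) (space (\<nu> t) - F) = 0))
   \<and> (\<exists>R. countable R \<and> ring_of_sets (space (Cmeas 1)) R
          \<and> sets (Cmeas 1) = sigma_sets (space (Cmeas 1)) R
          \<and> (\<forall>A\<in>R. (\<lambda>t. measure (distr (\<nu> t) (Cmeas 1) (scaleC t)) A)
                       \<in> borel_measurable (restrict_space borel {0<..})))
   \<and> (\<exists>\<Delta> :: (real \<times> real) \<times> real set \<Rightarrow> ennreal.
          \<Delta> \<in> borel_measurable (restrict_space borel ({0<..} \<times> {0<..}) \<Otimes>\<^sub>M Cmeas 1)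
        \<and> (\<forall>s>0. \<forall>t>0. AE Z in \<nu> (s + t).
              \<Delta> ((s, t), scaleC (s + t) Z) = RN_deriv (\<nu> (s + t)) (conv_meas \<nu> s t) Z))"

definition restr :: "'a measure \<Rightarrow> 'a set \<Rightarrow> 'a measure" where
  "restr \<rho> E = density \<rho> (indicator E)"

text \<open>The dominating finite measure m = rho + eta (same measurable space assumed).\<close>
definition sum_meas :: "'a measure \<Rightarrow> 'a measure \<Rightarrow> 'a measure" where
  "sum_meas \<rho> \<eta> = measure_of (space \<rho>) (sets \<rho>) (\<lambda>A. emeasure \<rho> A + emeasure \<eta> A)"

definition hell_aff :: "'a measure \<Rightarrow> 'a measure \<Rightarrow> real" where
  "hell_aff \<rho> \<eta> = (let m = sum_meas \<rho> \<eta> in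
     enn2real (\<integral>\<^sup>+ x. ennreal (sqrt (enn2real (RN_deriv m \<rho> x) * enn2real (RN_deriv m \<eta> x))) \<partial>m))"

definition hell_sq :: "'a measure \<Rightarrow> 'a measure \<Rightarrow> real" where
  "hell_sq \<rho> \<eta> = measure \<rho> (space \<rho>) + measure \<eta> (space \<eta>) - 2 * hell_aff \<rho> \<eta>"

end

theory Submission
  imports Defs
begin

(* Since nu_u and sigma = sigma_{u1,u2} are probability measures, 2 (1 - H(nu_u, sigma)) is
   d^2_Hell(nu_u, sigma), and the Hellinger affinity is additive over the measurable partition
   {empty}, E10, E01, E11 of C_u; so 2 (1 - H) is the sum of the squared Hellinger distances of the
   four restrictions.  On the atom {empty} this is (sqrt p - sqrt q)^2 <= |p - q|, which is (iii)
   because sigma {empty} = nu_u1 {empty} nu_u2 {empty}; on E10 and E01 it is (iv); on E11 it is at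
   most nu_u E11 + sigma E11.  Here nu_u E11 is (ii), and sigma E11 <= nu_u1 (Z <> {}) nu_u2 (Z <> {})
   = O(u1 u2) by (i): if Z1 \<union> (u1 + Z2) meets both [0, u1] and [u1, u] while Z1 or Z2 is empty,
   then u1 \<in> Z1 or 0 \<in> Z2, and these events are null since nu_t {Z. r \<in> Z} = 0. *)

section \<open>Hit-or-miss events of closed subsets\<close>

lemma space_Cmeas: "space (Cmeas x) = Cspace x"
proof -
  have "topspace (fell_topology x) = Cspace x"
    unfolding fell_topology_def by (auto simp: topspace_subtopology)
  then show ?thesis unfolding Cmeas_def borel_of_top_def
    by (subst space_measure_of) (auto dest: openin_subset)
qed

lemma sets_Cmeas_miss:
  assumes "compact K"
  shows "{Z \<in> Cspace x. Z \<inter> K = {}} \<in> sets (Cmeas x)"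
proof -
  have "openin (fell_topology x) ({F. F \<inter> K = {}} \<inter> Cspace x)"
    unfolding fell_topology_def openin_subtopology
    by (rule exI[of _ "{F. F \<inter> K = {}}"]) (auto intro!: topology_generated_by_Basis assms)
  moreover have "{F. F \<inter> K = {}} \<inter> Cspace x = {Z \<in> Cspace x. Z \<inter> K = {}}" by auto
  ultimately have "openin (fell_topology x) {Z \<in> Cspace x. Z \<inter> K = {}}" by simp
  then show ?thesis unfolding Cmeas_def borel_of_top_def
    by (subst sets_measure_of) (auto dest: openin_subset)
qed

lemma sets_Cmeas_hit:
  assumes "compact K"
  shows "{Z \<in> Cspace x. Z \<inter> K \<noteq> {}} \<in> sets (Cmeas x)"
proof -
  have "{Z \<in> Cspace x. Z \<inter> K \<noteq> {}} = space (Cmeas x) - {Z \<in> Cspace x. Z \<inter> K = {}}"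
    by (auto simp: space_Cmeas)
  then show ?thesis using sets_Cmeas_miss[OF assms] by auto
qed

lemma sets_Cmeas_nonempty: "{Z \<in> Cspace x. Z \<noteq> {}} \<in> sets (Cmeas x)"
proof -
  have "{Z \<in> Cspace x. Z \<noteq> {}} = {Z \<in> Cspace x. Z \<inter> {0..x} \<noteq> {}}"
    unfolding Cspace_def by auto
  then show ?thesis using sets_Cmeas_hit[of "{0..x}" x] by simp
qed

lemma sets_Cmeas_point: "{Z \<in> Cspace x. r \<in> Z} \<in> sets (Cmeas x)"
proof -
  have "{Z \<in> Cspace x. r \<in> Z} = {Z \<in> Cspace x. Z \<inter> {r} \<noteq> {}}" by auto
  then show ?thesis using sets_Cmeas_hit[of "{r}" x] by simp
qed

lemma empty_in_Cspace: "{} \<in> Cspace x"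
  unfolding Cspace_def by auto

lemma sets_Cmeas_empty: "{{}} \<in> sets (Cmeas x)"
proof -
  have "{{}} = {Z \<in> Cspace x. Z \<inter> {0..x} = {}}" unfolding Cspace_def by auto
  then show ?thesis using sets_Cmeas_miss[of "{0..x}" x] by simp
qed

lemma oplus_in_Cspace:
  assumes "a \<ge> 0" "b \<ge> 0" "Z1 \<in> Cspace a" "Z2 \<in> Cspace b"
  shows "oplus a b (Z1, Z2) \<in> Cspace (a + b)"
proof -
  have "closed ((+) a ` Z2)" using assms(4) unfolding Cspace_def by (auto intro: closed_translation)
  moreover have "(\<lambda>r. a + r) ` Z2 = (+) a ` Z2" by auto
  ultimately show ?thesis using assms unfolding Cspace_def oplus_def by (auto intro!: closed_Un)
qed

lemma oplus_hits_both_cases: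
  assumes "Z1 \<in> Cspace a" "Z2 \<in> Cspace b"
    and "oplus a b (Z1, Z2) \<inter> {0..a} \<noteq> {}" "oplus a b (Z1, Z2) \<inter> {a..a + b} \<noteq> {}"
  shows "(Z1 \<noteq> {} \<and> Z2 \<noteq> {}) \<or> a \<in> Z1 \<or> 0 \<in> Z2"
proof -
  have "Z1 \<subseteq> {0..a}" "Z2 \<subseteq> {0..b}" using assms(1,2) unfolding Cspace_def by auto
  then show ?thesis using assms(3,4) unfolding oplus_def by fastforce
qed

section \<open>Hellinger affinity of restrictions\<close>

lemma sets_restr [simp]: "sets (restr \<rho> E) = sets \<rho>" and space_restr [simp]: "space (restr \<rho> E) = space \<rho>"
  unfolding restr_def by auto

lemma emeasure_restr:
  assumes "E \<in> sets \<rho>" "A \<in> sets \<rho>"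
  shows "emeasure (restr \<rho> E) A = emeasure \<rho> (E \<inter> A)"
  unfolding restr_def using assms by (simp add: emeasure_restricted)

lemma measure_restr_space:
  assumes "E \<in> sets \<rho>"
  shows "measure (restr \<rho> E) (space (restr \<rho> E)) = measure \<rho> E"
  unfolding measure_def using assms
  by (simp add: emeasure_restr Int_absorb2 sets.sets_into_space)

lemma hell_sq_le: "hell_sq \<rho> \<eta> \<le> measure \<rho> (space \<rho>) + measure \<eta> (space \<eta>)"
  unfolding hell_sq_def hell_aff_def Let_def by simp

lemma add_diff_two_sqrt_mult_le_abs_diff:
  fixes a b :: real
  assumes "a \<ge> 0" "b \<ge> 0"
  shows "a + b - 2 * sqrt (a * b) \<le> \<bar>a - b\<bar>"
proof -
  define x y where "x = sqrt a" and "y = sqrt b"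
  have xy: "x \<ge> 0" "y \<ge> 0" and ab: "a = x * x" "b = y * y" and "sqrt (a * b) = x * y"
    unfolding x_def y_def using assms by (auto simp: real_sqrt_mult)
  moreover have "\<bar>x - y\<bar> * \<bar>x - y\<bar> \<le> (x + y) * \<bar>x - y\<bar>"
    using xy by (intro mult_right_mono) auto
  moreover have "(x + y) * \<bar>x - y\<bar> = \<bar>(x + y) * (x - y)\<bar>"
    using xy by (simp add: abs_mult)
  moreover have "(x + y) * (x - y) = a - b"
    unfolding ab by (simp add: algebra_simps)
  ultimately show ?thesis by (simp add: algebra_simps)
qed

definition hell_integrand :: "'a measure \<Rightarrow> 'a measure \<Rightarrow> 'a \<Rightarrow> ennreal" where
  "hell_integrand \<rho> \<eta> x = ennreal (sqrt (enn2real (RN_deriv (sum_meas \<rho> \<eta>) \<rho> x)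
                                         * enn2real (RN_deriv (sum_meas \<rho> \<eta>) \<eta> x)))"

lemma hell_aff_eq_nn_integral:
  "hell_aff \<rho> \<eta> = enn2real (\<integral>\<^sup>+x. hell_integrand \<rho> \<eta> x \<partial>sum_meas \<rho> \<eta>)"
  unfolding hell_aff_def hell_integrand_def Let_def ..

lemma borel_measurable_hell_integrand [measurable]:
  "hell_integrand \<rho> \<eta> \<in> borel_measurable (sum_meas \<rho> \<eta>)"
  unfolding hell_integrand_def by measurable

lemma two_hell_integrand_le:
  "2 * hell_integrand \<rho> \<eta> x \<le> RN_deriv (sum_meas \<rho> \<eta>) \<rho> x + RN_deriv (sum_meas \<rho> \<eta>) \<eta> x"
proof -
  define F G where "F = enn2real (RN_deriv (sum_meas \<rho> \<eta>) \<rho> x)"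
    and "G = enn2real (RN_deriv (sum_meas \<rho> \<eta>) \<eta> x)"
  have FG: "F \<ge> 0" "G \<ge> 0" unfolding F_def G_def by auto
  have "0 \<le> (sqrt F - sqrt G)\<^sup>2" by simp
  then have "2 * sqrt (F * G) \<le> F + G"
    using FG by (simp add: power2_eq_square algebra_simps real_sqrt_mult)
  then have "ennreal (2 * sqrt (F * G)) \<le> ennreal (F + G)" by (rule ennreal_leI)
  then have "2 * hell_integrand \<rho> \<eta> x \<le> ennreal F + ennreal G"
    unfolding hell_integrand_def F_def[symmetric] G_def[symmetric]
    using FG by (simp add: ennreal_mult)
  also have "\<dots> \<le> RN_deriv (sum_meas \<rho> \<eta>) \<rho> x + RN_deriv (sum_meas \<rho> \<eta>) \<eta> x"
    unfolding F_def G_def by (intro add_mono) (simp_all add: ennreal_enn2real_if)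
  finally show ?thesis .
qed

lemma emeasure_density_space:
  "f \<in> borel_measurable M \<Longrightarrow> emeasure (density M f) (space M) = (\<integral>\<^sup>+x. f x \<partial>M)"
  by (subst emeasure_density) (auto intro!: nn_integral_cong)

lemma sets_sum_meas [simp]: "sets (sum_meas \<rho> \<eta>) = sets \<rho>"
  and space_sum_meas [simp]: "space (sum_meas \<rho> \<eta>) = space \<rho>"
  unfolding sum_meas_def by (auto simp: sets.space_closed)

lemma emeasure_sum_meas:
  assumes "sets \<eta> = sets \<rho>" "A \<in> sets \<rho>"
  shows "emeasure (sum_meas \<rho> \<eta>) A = emeasure \<rho> A + emeasure \<eta> A"
  unfolding sum_meas_def
proof (rule emeasure_measure_of_sigma)
  show "countably_additive (sets \<rho>) (\<lambda>A. emeasure \<rho> A + emeasure \<eta> A)"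
    unfolding countably_additive_def
  proof (intro allI impI)
    fix B :: "nat \<Rightarrow> _"
    assume B: "range B \<subseteq> sets \<rho>" "disjoint_family B" "\<Union> (range B) \<in> sets \<rho>"
    have "(\<Sum>i. emeasure \<rho> (B i) + emeasure \<eta> (B i)) = (\<Sum>i. emeasure \<rho> (B i)) + (\<Sum>i. emeasure \<eta> (B i))"
      by (rule suminf_add[symmetric]) auto
    also have "\<dots> = emeasure \<rho> (\<Union> (range B)) + emeasure \<eta> (\<Union> (range B))"
      using suminf_emeasure[OF B(1,2)] suminf_emeasure[of B \<eta>] B assms(1) by simp
    finally show "(\<Sum>i. emeasure \<rho> (B i) + emeasure \<eta> (B i)) = emeasure \<rho> (\<Union> (range B)) + emeasure \<eta> (\<Union> (range B))" .
  qed
qed (use assms sets.sigma_algebra_axioms in \<open>auto simp: positive_def\<close>)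

locale hellinger_pair =
  fixes \<rho> \<eta> :: "'a measure"
  assumes finite_\<rho>: "finite_measure \<rho>" and finite_\<eta>: "finite_measure \<eta>"
    and sets_eq: "sets \<eta> = sets \<rho>"
begin

abbreviation \<mu> where "\<mu> \<equiv> sum_meas \<rho> \<eta>"

lemma space_eq: "space \<eta> = space \<rho>"
  using sets_eq by (rule sets_eq_imp_space_eq)

lemma finite_measure_sum_meas: "finite_measure \<mu>"
  by (rule finite_measureI)
    (use emeasure_sum_meas[OF sets_eq sets.top] space_eq finite_measure.emeasure_finite[OF finite_\<rho>]
      finite_measure.emeasure_finite[OF finite_\<eta>] in auto)

lemma absolutely_continuous_sum_meas:
  "absolutely_continuous \<mu> \<rho>" "absolutely_continuous \<mu> \<eta>"
  unfolding absolutely_continuous_def null_sets_def using emeasure_sum_meas[OF sets_eq] sets_eq by auto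

lemma density_RN_deriv_sum_meas:
  "density \<mu> (RN_deriv \<mu> \<rho>) = \<rho>" "density \<mu> (RN_deriv \<mu> \<eta>) = \<eta>"
proof -
  interpret fm: finite_measure \<mu> by (rule finite_measure_sum_meas)
  show "density \<mu> (RN_deriv \<mu> \<rho>) = \<rho>"
    using absolutely_continuous_sum_meas by (intro fm.density_RN_deriv) auto
  show "density \<mu> (RN_deriv \<mu> \<eta>) = \<eta>"
    using absolutely_continuous_sum_meas sets_eq by (intro fm.density_RN_deriv) auto
qed

lemma two_nn_integral_hell_integrand_le:
  "2 * (\<integral>\<^sup>+x. hell_integrand \<rho> \<eta> x \<partial>\<mu>) \<le> emeasure \<rho> (space \<rho>) + emeasure \<eta> (space \<eta>)"
proof -
  have "2 * (\<integral>\<^sup>+x. hell_integrand \<rho> \<eta> x \<partial>\<mu>) = (\<integral>\<^sup>+x. 2 * hell_integrand \<rho> \<eta> x \<partial>\<mu>)"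
    by (simp add: nn_integral_cmult)
  also have "\<dots> \<le> (\<integral>\<^sup>+x. RN_deriv \<mu> \<rho> x + RN_deriv \<mu> \<eta> x \<partial>\<mu>)"
    by (intro nn_integral_mono two_hell_integrand_le)
  also have "\<dots> = emeasure (density \<mu> (RN_deriv \<mu> \<rho>)) (space \<mu>) + emeasure (density \<mu> (RN_deriv \<mu> \<eta>)) (space \<mu>)"
    unfolding emeasure_density_space[OF borel_measurable_RN_deriv] by (simp add: nn_integral_add)
  finally show ?thesis unfolding density_RN_deriv_sum_meas by (simp add: space_eq)
qed

lemma nn_integral_hell_integrand_finite:
  "(\<integral>\<^sup>+x. hell_integrand \<rho> \<eta> x * indicator E x \<partial>\<mu>) < \<infinity>"
proof -
  have "emeasure \<rho> (space \<rho>) + emeasure \<eta> (space \<eta>) < \<infinity>"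
    using finite_measure.emeasure_finite[OF finite_\<rho>] finite_measure.emeasure_finite[OF finite_\<eta>]
    by (simp add: less_top)
  then have "2 * (\<integral>\<^sup>+x. hell_integrand \<rho> \<eta> x \<partial>\<mu>) < \<infinity>"
    using two_nn_integral_hell_integrand_le by (rule le_less_trans[rotated])
  moreover have "(\<integral>\<^sup>+x. hell_integrand \<rho> \<eta> x * indicator E x \<partial>\<mu>) \<le> (\<integral>\<^sup>+x. hell_integrand \<rho> \<eta> x \<partial>\<mu>)"
    by (intro nn_integral_mono) (simp add: indicator_def)
  ultimately show ?thesis by (auto simp: ennreal_mult_less_top)
qed

lemma hell_sq_nonneg: "hell_sq \<rho> \<eta> \<ge> 0"
proof -
  have "ennreal (2 * hell_aff \<rho> \<eta>) = 2 * (\<integral>\<^sup>+x. hell_integrand \<rho> \<eta> x \<partial>\<mu>)"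
  proof -
    have "(\<integral>\<^sup>+x. hell_integrand \<rho> \<eta> x \<partial>\<mu>) = (\<integral>\<^sup>+x. hell_integrand \<rho> \<eta> x * indicator (space \<rho>) x \<partial>\<mu>)"
      by (intro nn_integral_cong) simp
    then show ?thesis unfolding hell_aff_eq_nn_integral
      using nn_integral_hell_integrand_finite[of "space \<rho>"] by (simp add: ennreal_mult less_top)
  qed
  also have "\<dots> \<le> emeasure \<rho> (space \<rho>) + emeasure \<eta> (space \<eta>)"
    by (rule two_nn_integral_hell_integrand_le)
  also have "\<dots> = ennreal (measure \<rho> (space \<rho>) + measure \<eta> (space \<eta>))"
    using finite_measure.emeasure_eq_measure[OF finite_\<rho>] finite_measure.emeasure_eq_measure[OF finite_\<eta>]
    by (simp add: ennreal_plus)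
  finally show ?thesis unfolding hell_sq_def by (subst (asm) ennreal_le_iff) auto
qed

lemma sum_meas_restr:
  assumes E: "E \<in> sets \<rho>"
  shows "sum_meas (restr \<rho> E) (restr \<eta> E) = density \<mu> (indicator E)"
proof (rule measure_eqI)
  fix A assume "A \<in> sets (sum_meas (restr \<rho> E) (restr \<eta> E))"
  then have A: "A \<in> sets \<rho>" by simp
  have "emeasure (sum_meas (restr \<rho> E) (restr \<eta> E)) A = emeasure \<rho> (E \<inter> A) + emeasure \<eta> (E \<inter> A)"
    using A E sets_eq by (simp add: emeasure_sum_meas emeasure_restr)
  also have "\<dots> = emeasure \<mu> (E \<inter> A)"
    using A E by (simp add: emeasure_sum_meas[OF sets_eq])
  also have "\<dots> = emeasure (density \<mu> (indicator E)) A"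
    using A E by (simp add: emeasure_restricted)
  finally show "emeasure (sum_meas (restr \<rho> E) (restr \<eta> E)) A = emeasure (density \<mu> (indicator E)) A" .
qed simp

lemma hell_aff_restr:
  assumes E: "E \<in> sets \<rho>"
  shows "hell_aff (restr \<rho> E) (restr \<eta> E) = enn2real (\<integral>\<^sup>+x. hell_integrand \<rho> \<eta> x * indicator E x \<partial>\<mu>)"
proof -
  let ?\<mu>E = "sum_meas (restr \<rho> E) (restr \<eta> E)"
  have [measurable]: "E \<in> sets \<mu>" using E by simp
  interpret \<mu>E: finite_measure ?\<mu>E
    unfolding sum_meas_restr[OF E] using E
    by (intro finite_measure.finite_measure_restricted finite_measure_sum_meas) simp
  have RN_deriv_restr: "AE x in ?\<mu>E. RN_deriv \<mu> \<nu> x = RN_deriv ?\<mu>E (restr \<nu> E) x"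
    if \<nu>: "density \<mu> (RN_deriv \<mu> \<nu>) = \<nu>" for \<nu>
  proof (rule \<mu>E.RN_deriv_unique)
    have "restr \<nu> E = density (density \<mu> (RN_deriv \<mu> \<nu>)) (indicator E)"
      using \<nu> by (simp add: restr_def)
    also have "\<dots> = density (density \<mu> (indicator E)) (RN_deriv \<mu> \<nu>)"
      by (simp add: density_density_eq mult.commute)
    finally show "density ?\<mu>E (RN_deriv \<mu> \<nu>) = restr \<nu> E"
      unfolding sum_meas_restr[OF E] ..
  qed (simp add: sum_meas_restr[OF E])
  have "hell_aff (restr \<rho> E) (restr \<eta> E) = enn2real (\<integral>\<^sup>+x. hell_integrand \<rho> \<eta> x \<partial>?\<mu>E)"
    unfolding hell_aff_eq_nn_integral
  proof (intro arg_cong[where f=enn2real] nn_integral_cong_AE)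
    show "AE x in ?\<mu>E. hell_integrand (restr \<rho> E) (restr \<eta> E) x = hell_integrand \<rho> \<eta> x"
      using RN_deriv_restr[OF density_RN_deriv_sum_meas(1)] RN_deriv_restr[OF density_RN_deriv_sum_meas(2)]
      unfolding hell_integrand_def by eventually_elim simp
  qed
  also have "\<dots> = enn2real (\<integral>\<^sup>+x. indicator E x * hell_integrand \<rho> \<eta> x \<partial>\<mu>)"
    unfolding sum_meas_restr[OF E] by (subst nn_integral_density) auto
  finally show ?thesis by (simp add: mult.commute)
qed

lemma hell_aff_restr_space: "hell_aff (restr \<rho> (space \<rho>)) (restr \<eta> (space \<rho>)) = hell_aff \<rho> \<eta>"
  unfolding hell_aff_restr[OF sets.top] unfolding hell_aff_eq_nn_integral
  by (intro arg_cong[where f=enn2real] nn_integral_cong) simp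

lemma hell_aff_restr_Un:
  assumes "A \<in> sets \<rho>" "B \<in> sets \<rho>" "A \<inter> B = {}"
  shows "hell_aff (restr \<rho> (A \<union> B)) (restr \<eta> (A \<union> B))
           = hell_aff (restr \<rho> A) (restr \<eta> A) + hell_aff (restr \<rho> B) (restr \<eta> B)"
proof -
  have [measurable]: "A \<in> sets \<mu>" "B \<in> sets \<mu>" using assms by auto
  have "(\<integral>\<^sup>+x. hell_integrand \<rho> \<eta> x * indicator (A \<union> B) x \<partial>\<mu>)
      = (\<integral>\<^sup>+x. hell_integrand \<rho> \<eta> x * indicator A x + hell_integrand \<rho> \<eta> x * indicator B x \<partial>\<mu>)"
    using assms(3) by (intro nn_integral_cong) (auto simp: indicator_def)
  also have "\<dots> = (\<integral>\<^sup>+x. hell_integrand \<rho> \<eta> x * indicator A x \<partial>\<mu>)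
                  + (\<integral>\<^sup>+x. hell_integrand \<rho> \<eta> x * indicator B x \<partial>\<mu>)"
    by (rule nn_integral_add) measurable
  finally show ?thesis
    using assms nn_integral_hell_integrand_finite[of A] nn_integral_hell_integrand_finite[of B]
    by (simp add: hell_aff_restr sets.Un enn2real_plus less_top)
qed

lemma hell_aff_restr_singleton:
  assumes "{c} \<in> sets \<rho>"
  shows "hell_aff (restr \<rho> {c}) (restr \<eta> {c}) = sqrt (measure \<rho> {c} * measure \<eta> {c})"
proof -
  have c: "{c} \<in> sets \<mu>" using assms by simp
  define M where "M = enn2real (emeasure \<mu> {c})"
  have measure_singleton: "measure \<nu> {c} = enn2real (RN_deriv \<mu> \<nu> c) * M"
    if "density \<mu> (RN_deriv \<mu> \<nu>) = \<nu>" for \<nu>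
  proof -
    have "emeasure \<nu> {c} = emeasure (density \<mu> (RN_deriv \<mu> \<nu>)) {c}" using that by simp
    also have "\<dots> = RN_deriv \<mu> \<nu> c * emeasure \<mu> {c}" using c by (simp add: emeasure_density)
    finally show ?thesis unfolding measure_def M_def by (simp add: enn2real_mult)
  qed
  have "hell_aff (restr \<rho> {c}) (restr \<eta> {c}) = sqrt (enn2real (RN_deriv \<mu> \<rho> c) * enn2real (RN_deriv \<mu> \<eta> c)) * M"
    unfolding hell_aff_restr[OF assms] nn_integral_indicator_singleton[OF c]
    by (simp add: hell_integrand_def M_def enn2real_mult)
  also have "\<dots> = sqrt ((enn2real (RN_deriv \<mu> \<rho> c) * M) * (enn2real (RN_deriv \<mu> \<eta> c) * M))"
    by (simp add: M_def real_sqrt_mult)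
  finally show ?thesis unfolding measure_singleton[OF density_RN_deriv_sum_meas(1)]
      measure_singleton[OF density_RN_deriv_sum_meas(2)] .
qed

lemma hell_sq_restr_eq:
  assumes "E \<in> sets \<rho>"
  shows "hell_sq (restr \<rho> E) (restr \<eta> E) = measure \<rho> E + measure \<eta> E - 2 * hell_aff (restr \<rho> E) (restr \<eta> E)"
  unfolding hell_sq_def using measure_restr_space[of E \<rho>] measure_restr_space[of E \<eta>] assms sets_eq
  by simp

lemma hell_sq_restr_space: "hell_sq (restr \<rho> (space \<rho>)) (restr \<eta> (space \<rho>)) = hell_sq \<rho> \<eta>"
  using hell_sq_restr_eq[OF sets.top] unfolding hell_aff_restr_space by (simp add: hell_sq_def space_eq)

lemma hell_sq_restr_Un:
  assumes "A \<in> sets \<rho>" "B \<in> sets \<rho>" "A \<inter> B = {}"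
  shows "hell_sq (restr \<rho> (A \<union> B)) (restr \<eta> (A \<union> B))
           = hell_sq (restr \<rho> A) (restr \<eta> A) + hell_sq (restr \<rho> B) (restr \<eta> B)"
  using assms sets_eq hell_aff_restr_Un[OF assms]
    finite_measure.finite_measure_Union[OF finite_\<rho>] finite_measure.finite_measure_Union[OF finite_\<eta>]
  by (simp add: hell_sq_restr_eq sets.Un)

lemma hell_sq_restr_singleton_le:
  assumes "{c} \<in> sets \<rho>"
  shows "hell_sq (restr \<rho> {c}) (restr \<eta> {c}) \<le> \<bar>measure \<rho> {c} - measure \<eta> {c}\<bar>"
  using assms add_diff_two_sqrt_mult_le_abs_diff[of "measure \<rho> {c}" "measure \<eta> {c}"]
  by (simp add: hell_sq_restr_eq hell_aff_restr_singleton)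

end

section \<open>Splitting a factorizing family\<close>

lemma measurable_factorizing_familyD:
  assumes "measurable_factorizing_family \<nu>" "x > 0"
  shows "prob_space (\<nu> x)" "sets (\<nu> x) = sets (Cmeas x)" "space (\<nu> x) = Cspace x"
    and "r \<in> {0..x} \<Longrightarrow> emeasure (\<nu> x) {Z \<in> Cspace x. r \<in> Z} = 0"
  using assms unfolding measurable_factorizing_family_def by (auto simp: space_Cmeas)

lemma measurable_factorizing_family_absolutely_continuous:
  assumes "measurable_factorizing_family \<nu>" "a > 0" "b > 0"
  shows "absolutely_continuous (conv_meas \<nu> a b) (\<nu> (a + b))"
  using assms unfolding measurable_factorizing_family_def by auto

locale factorizing_split =
  fixes \<nu> :: "real \<Rightarrow> real set measure" and a b :: real
  assumes mff: "measurable_factorizing_family \<nu>" and pos: "a > 0" "b > 0"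
begin

abbreviation \<sigma> where "\<sigma> \<equiv> conv_meas \<nu> a b"

definition E10 where "E10 = {Z \<in> space (\<nu> (a + b)). Z \<inter> {0..a} \<noteq> {} \<and> Z \<inter> {a..a + b} = {}}"
definition E01 where "E01 = {Z \<in> space (\<nu> (a + b)). Z \<inter> {0..a} = {} \<and> Z \<inter> {a..a + b} \<noteq> {}}"
definition E11 where "E11 = {Z \<in> space (\<nu> (a + b)). Z \<inter> {0..a} \<noteq> {} \<and> Z \<inter> {a..a + b} \<noteq> {}}"

lemma prob_space_\<nu>: "prob_space (\<nu> a)" "prob_space (\<nu> b)" "prob_space (\<nu> (a + b))"
  using measurable_factorizing_familyD(1)[OF mff] pos by auto

lemma sets_\<nu> [simp]:
  "sets (\<nu> a) = sets (Cmeas a)" "sets (\<nu> b) = sets (Cmeas b)" "sets (\<nu> (a + b)) = sets (Cmeas (a + b))"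
  using measurable_factorizing_familyD(2)[OF mff] pos by auto

lemma space_\<nu> [simp]: "space (\<nu> a) = Cspace a" "space (\<nu> b) = Cspace b" "space (\<nu> (a + b)) = Cspace (a + b)"
  using measurable_factorizing_familyD(3)[OF mff] pos by auto

lemma sets_conv_meas [simp]: "sets \<sigma> = sets (Cmeas (a + b))"
  and space_conv_meas [simp]: "space \<sigma> = Cspace (a + b)"
  unfolding conv_meas_def by (auto simp: space_Cmeas)

lemma emeasure_pair_Times:
  "A \<in> sets (\<nu> a) \<Longrightarrow> B \<in> sets (\<nu> b) \<Longrightarrow> emeasure (\<nu> a \<Otimes>\<^sub>M \<nu> b) (A \<times> B) = emeasure (\<nu> a) A * emeasure (\<nu> b) B"
  using prob_space_\<nu>(2) by (intro sigma_finite_measure.emeasure_pair_measure_Times) (auto intro: prob_space_imp_sigma_finite)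

(* Measurability of oplus is never established: if the image measure degenerated, distr would
   return the zero measure, contradicting the absolute continuity of nu (a + b) w.r.t. sigma. *)
lemma emeasure_conv_meas:
  assumes A: "A \<in> sets (Cmeas (a + b))"
  shows "emeasure \<sigma> A = emeasure (\<nu> a \<Otimes>\<^sub>M \<nu> b) (oplus a b -` A \<inter> space (\<nu> a \<Otimes>\<^sub>M \<nu> b))"
proof -
  let ?\<mu> = "\<lambda>A. emeasure (\<nu> a \<Otimes>\<^sub>M \<nu> b) (oplus a b -` A \<inter> space (\<nu> a \<Otimes>\<^sub>M \<nu> b))"
  have sigma_sets: "sigma_sets (space (Cmeas (a + b))) (sets (Cmeas (a + b))) = sets (Cmeas (a + b))"
    by (rule sets.sigma_sets_eq)
  show ?thesis
  proof (cases "measure_space (space (Cmeas (a + b))) (sets (Cmeas (a + b))) ?\<mu>")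
    case True
    then show ?thesis unfolding conv_meas_def distr_def emeasure_measure_of_conv sigma_sets using A by simp
  next
    case False
    then have "emeasure \<sigma> X = 0" for X
      unfolding conv_meas_def distr_def emeasure_measure_of_conv sigma_sets by simp
    then have "Cspace (a + b) \<in> null_sets (\<nu> (a + b))"
      using measurable_factorizing_family_absolutely_continuous[OF mff pos] sets.top[of \<sigma>]
      unfolding absolutely_continuous_def by (auto simp: null_sets_def)
    then show ?thesis using prob_space.emeasure_space_1[OF prob_space_\<nu>(3)] by (simp add: null_sets_def)
  qed
qed

lemma prob_space_conv_meas: "prob_space \<sigma>"
proof (rule prob_spaceI)
  have "oplus a b -` Cspace (a + b) \<inter> space (\<nu> a \<Otimes>\<^sub>M \<nu> b) = Cspace a \<times> Cspace b"
    using oplus_in_Cspace pos by (auto simp: space_pair_measure)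
  then show "emeasure \<sigma> (space \<sigma>) = 1"
    using emeasure_conv_meas[OF sets.top[of "Cmeas (a + b)", unfolded space_Cmeas]]
      emeasure_pair_Times[OF sets.top sets.top] prob_space.emeasure_space_1[OF prob_space_\<nu>(1)]
      prob_space.emeasure_space_1[OF prob_space_\<nu>(2)]
    by simp
qed

lemma measure_conv_meas_empty: "measure \<sigma> {{}} = measure (\<nu> a) {{}} * measure (\<nu> b) {{}}"
proof -
  have "oplus a b -` {{}} \<inter> space (\<nu> a \<Otimes>\<^sub>M \<nu> b) = {{}} \<times> {{}}"
    using empty_in_Cspace by (auto simp: space_pair_measure oplus_def)
  then have "emeasure \<sigma> {{}} = emeasure (\<nu> a \<Otimes>\<^sub>M \<nu> b) ({{}} \<times> {{}})"
    unfolding emeasure_conv_meas[OF sets_Cmeas_empty] by (rule arg_cong)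
  also have "\<dots> = emeasure (\<nu> a) {{}} * emeasure (\<nu> b) {{}}"
    by (rule emeasure_pair_Times) (simp_all add: sets_Cmeas_empty)
  finally show ?thesis unfolding measure_def by (simp add: enn2real_mult)
qed

lemma sets_partition:
  "{{}} \<in> sets (\<nu> (a + b))" "E10 \<in> sets (\<nu> (a + b))" "E01 \<in> sets (\<nu> (a + b))" "E11 \<in> sets (\<nu> (a + b))"
proof -
  have hit: "{Z \<in> Cspace (a + b). Z \<inter> K \<noteq> {}} \<in> sets (\<nu> (a + b))"
    and miss: "{Z \<in> Cspace (a + b). Z \<inter> K = {}} \<in> sets (\<nu> (a + b))" if "compact K" for K
    using sets_Cmeas_hit[OF that] sets_Cmeas_miss[OF that] by simp_all
  have "E10 = {Z \<in> Cspace (a + b). Z \<inter> {0..a} \<noteq> {}} \<inter> {Z \<in> Cspace (a + b). Z \<inter> {a..a + b} = {}}"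
    "E01 = {Z \<in> Cspace (a + b). Z \<inter> {0..a} = {}} \<inter> {Z \<in> Cspace (a + b). Z \<inter> {a..a + b} \<noteq> {}}"
    "E11 = {Z \<in> Cspace (a + b). Z \<inter> {0..a} \<noteq> {}} \<inter> {Z \<in> Cspace (a + b). Z \<inter> {a..a + b} \<noteq> {}}"
    unfolding E10_def E01_def E11_def by auto
  then show "E10 \<in> sets (\<nu> (a + b))" "E01 \<in> sets (\<nu> (a + b))" "E11 \<in> sets (\<nu> (a + b))"
    by (simp_all only: sets.Int hit miss compact_Icc)
  show "{{}} \<in> sets (\<nu> (a + b))" using sets_Cmeas_empty by simp
qed

lemma space_partition: "space (\<nu> (a + b)) = (({{}} \<union> E10) \<union> E01) \<union> E11"
  and disjoint_partition: "{{}} \<inter> E10 = {}" "({{}} \<union> E10) \<inter> E01 = {}" "(({{}} \<union> E10) \<union> E01) \<inter> E11 = {}"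
proof -
  have "Z \<inter> {0..a} \<noteq> {} \<or> Z \<inter> {a..a + b} \<noteq> {}" if Z: "Z \<in> Cspace (a + b)" "Z \<noteq> {}" for Z
  proof -
    obtain r where "r \<in> Z" using Z(2) by auto
    moreover have "r \<in> {0..a + b}" using Z(1) \<open>r \<in> Z\<close> unfolding Cspace_def by auto
    ultimately show ?thesis by (cases "r \<le> a") auto
  qed
  then show "space (\<nu> (a + b)) = (({{}} \<union> E10) \<union> E01) \<union> E11"
    unfolding E10_def E01_def E11_def using empty_in_Cspace by auto
qed (auto simp: E10_def E01_def E11_def)

lemma measure_conv_meas_E11_le:
  "measure \<sigma> E11 \<le> measure (\<nu> a) {Z \<in> space (\<nu> a). Z \<noteq> {}} * measure (\<nu> b) {Z \<in> space (\<nu> b). Z \<noteq> {}}"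
proof -
  interpret pa: prob_space "\<nu> a" by (rule prob_space_\<nu>)
  interpret pb: prob_space "\<nu> b" by (rule prob_space_\<nu>)
  define NA NB where "NA = {Z \<in> Cspace a. Z \<noteq> {}}" and "NB = {Z \<in> Cspace b. Z \<noteq> {}}"
  define PA PB where "PA = {Z \<in> Cspace a. a \<in> Z}" and "PB = {Z \<in> Cspace b. 0 \<in> Z}"
  let ?P = "\<nu> a \<Otimes>\<^sub>M \<nu> b"
  have sets: "NA \<in> sets (\<nu> a)" "PA \<in> sets (\<nu> a)" "Cspace a \<in> sets (\<nu> a)"
    "NB \<in> sets (\<nu> b)" "PB \<in> sets (\<nu> b)" "Cspace b \<in> sets (\<nu> b)"
    unfolding NA_def NB_def PA_def PB_def using sets.top[of "Cmeas a"] sets.top[of "Cmeas b"]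
    by (simp_all add: space_Cmeas sets_Cmeas_nonempty sets_Cmeas_point)
  have null: "emeasure (\<nu> a) PA = 0" "emeasure (\<nu> b) PB = 0"
    unfolding PA_def PB_def using measurable_factorizing_familyD(4)[OF mff] pos by auto
  have "oplus a b -` E11 \<inter> space ?P \<subseteq> (NA \<times> NB \<union> PA \<times> Cspace b) \<union> Cspace a \<times> PB"
  proof
    fix p assume p: "p \<in> oplus a b -` E11 \<inter> space ?P"
    then obtain Z1 Z2 where "p = (Z1, Z2)" "Z1 \<in> Cspace a" "Z2 \<in> Cspace b" "oplus a b (Z1, Z2) \<in> E11"
      by (auto simp: space_pair_measure)
    moreover from this have "(Z1 \<noteq> {} \<and> Z2 \<noteq> {}) \<or> a \<in> Z1 \<or> 0 \<in> Z2"
      using oplus_hits_both_cases unfolding E11_def by blast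
    ultimately show "p \<in> (NA \<times> NB \<union> PA \<times> Cspace b) \<union> Cspace a \<times> PB"
      unfolding NA_def NB_def PA_def PB_def by auto
  qed
  then have "emeasure \<sigma> E11 \<le> emeasure ?P ((NA \<times> NB \<union> PA \<times> Cspace b) \<union> Cspace a \<times> PB)"
    unfolding emeasure_conv_meas[OF sets_partition(4)[unfolded sets_\<nu>]] using sets by (intro emeasure_mono) auto
  also have "\<dots> \<le> emeasure ?P (NA \<times> NB) + emeasure ?P (PA \<times> Cspace b) + emeasure ?P (Cspace a \<times> PB)"
    using sets by (intro order.trans[OF emeasure_subadditive] add_mono emeasure_subadditive) auto
  also have "\<dots> = emeasure (\<nu> a) NA * emeasure (\<nu> b) NB"
    using sets null by (simp add: emeasure_pair_Times)
  also have "\<dots> = ennreal (measure (\<nu> a) NA * measure (\<nu> b) NB)"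
    by (simp add: pa.emeasure_eq_measure pb.emeasure_eq_measure ennreal_mult)
  finally show ?thesis
    unfolding measure_def[of \<sigma>] NA_def NB_def by (intro enn2real_leI) simp_all
qed

sublocale hellinger_pair "\<nu> (a + b)" \<sigma>
  using prob_space_\<nu>(3) prob_space_conv_meas by (intro hellinger_pair.intro) (simp_all add: prob_space.finite_measure)

lemma hell_sq_conv_meas_le:
  "hell_sq (\<nu> (a + b)) \<sigma> \<le> \<bar>measure (\<nu> (a + b)) {{}} - measure (\<nu> a) {{}} * measure (\<nu> b) {{}}\<bar>
     + measure (\<nu> (a + b)) E11
     + measure (\<nu> a) {Z \<in> space (\<nu> a). Z \<noteq> {}} * measure (\<nu> b) {Z \<in> space (\<nu> b). Z \<noteq> {}}
     + hell_sq (restr (\<nu> (a + b)) E10) (restr \<sigma> E10) + hell_sq (restr (\<nu> (a + b)) E01) (restr \<sigma> E01)"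
proof -
  have U: "{{}} \<union> E10 \<in> sets (\<nu> (a + b))" "({{}} \<union> E10) \<union> E01 \<in> sets (\<nu> (a + b))"
    by (rule sets.Un[OF sets_partition(1,2)], rule sets.Un[OF sets.Un[OF sets_partition(1,2)] sets_partition(3)])
  have "hell_sq (\<nu> (a + b)) \<sigma> = hell_sq (restr (\<nu> (a + b)) {{}}) (restr \<sigma> {{}})
      + hell_sq (restr (\<nu> (a + b)) E10) (restr \<sigma> E10) + hell_sq (restr (\<nu> (a + b)) E01) (restr \<sigma> E01)
      + hell_sq (restr (\<nu> (a + b)) E11) (restr \<sigma> E11)"
    unfolding hell_sq_restr_space[symmetric] space_partition
      hell_sq_restr_Un[OF U(2) sets_partition(4) disjoint_partition(3)]
      hell_sq_restr_Un[OF U(1) sets_partition(3) disjoint_partition(2)]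
      hell_sq_restr_Un[OF sets_partition(1,2) disjoint_partition(1)] ..
  moreover have "hell_sq (restr (\<nu> (a + b)) {{}}) (restr \<sigma> {{}})
      \<le> \<bar>measure (\<nu> (a + b)) {{}} - measure (\<nu> a) {{}} * measure (\<nu> b) {{}}\<bar>"
    using hell_sq_restr_singleton_le[OF sets_partition(1)] by (simp add: measure_conv_meas_empty)
  moreover have "hell_sq (restr (\<nu> (a + b)) E11) (restr \<sigma> E11) \<le> measure (\<nu> (a + b)) E11 + measure \<sigma> E11"
    using hell_sq_le[of "restr (\<nu> (a + b)) E11" "restr \<sigma> E11"]
      measure_restr_space[OF sets_partition(4)] measure_restr_space[of E11 \<sigma>] sets_partition(4)
    by simp
  ultimately show ?thesis using measure_conv_meas_E11_le by linarith
qed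

lemma one_minus_hell_aff_conv_meas_le:
  "\<bar>1 - hell_aff (\<nu> (a + b)) \<sigma>\<bar> \<le> \<bar>measure (\<nu> (a + b)) {{}} - measure (\<nu> a) {{}} * measure (\<nu> b) {{}}\<bar>
     + measure (\<nu> (a + b)) {Z \<in> space (\<nu> (a + b)). Z \<inter> {0..a} \<noteq> {} \<and> Z \<inter> {a..a + b} \<noteq> {}}
     + measure (\<nu> a) {Z \<in> space (\<nu> a). Z \<noteq> {}} * measure (\<nu> b) {Z \<in> space (\<nu> b). Z \<noteq> {}}
     + hell_sq (restr (\<nu> (a + b)) {Z \<in> space (\<nu> (a + b)). Z \<inter> {0..a} \<noteq> {} \<and> Z \<inter> {a..a + b} = {}})
               (restr \<sigma> {Z \<in> space (\<nu> (a + b)). Z \<inter> {0..a} \<noteq> {} \<and> Z \<inter> {a..a + b} = {}})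
     + hell_sq (restr (\<nu> (a + b)) {Z \<in> space (\<nu> (a + b)). Z \<inter> {0..a} = {} \<and> Z \<inter> {a..a + b} \<noteq> {}})
               (restr \<sigma> {Z \<in> space (\<nu> (a + b)). Z \<inter> {0..a} = {} \<and> Z \<inter> {a..a + b} \<noteq> {}})"
proof -
  have "hell_sq (\<nu> (a + b)) \<sigma> = 2 * (1 - hell_aff (\<nu> (a + b)) \<sigma>)"
    using prob_space.prob_space[OF prob_space_\<nu>(3)] prob_space.prob_space[OF prob_space_conv_meas]
    unfolding hell_sq_def by simp
  then have "\<bar>1 - hell_aff (\<nu> (a + b)) \<sigma>\<bar> \<le> hell_sq (\<nu> (a + b)) \<sigma>"
    using hell_sq_nonneg by (simp add: abs_le_iff)
  then show ?thesis using hell_sq_conv_meas_le unfolding E10_def E01_def E11_def by (rule order_trans)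
qed

end

lemma bigo_of_eventually_abs_le:
  fixes f g :: "'a \<Rightarrow> real"
  assumes "eventually (\<lambda>x. \<bar>f x\<bar> \<le> g x) F" "g \<in> O[F](h)"
  shows "f \<in> O[F](h)"
proof -
  from assms(1) have "f \<in> O[F](g)" by (intro landau_o.big_mono) (auto elim!: eventually_mono)
  then show ?thesis using assms(2) by (rule landau_o.big_trans)
qed

theorem proposition4p23:
  fixes \<nu> :: "real \<Rightarrow> real set measure" and s t :: real
  assumes fam: "measurable_factorizing_family \<nu>"
    and s: "s > 0" and t: "t > 0"
    and i0: "(\<lambda>l. measure (\<nu> (l * (s + t))) {Z \<in> space (\<nu> (l * (s + t))). Z \<noteq> {}})
               \<in> O[at_right 0](\<lambda>l. l * (s + t))"
    and i1: "(\<lambda>l. measure (\<nu> (l * s)) {Z \<in> space (\<nu> (l * s)). Z \<noteq> {}})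
               \<in> O[at_right 0](\<lambda>l. l * s)"
    and i2: "(\<lambda>l. measure (\<nu> (l * t)) {Z \<in> space (\<nu> (l * t)). Z \<noteq> {}})
               \<in> O[at_right 0](\<lambda>l. l * t)"
    and ii: "(\<lambda>l. measure (\<nu> (l * (s + t)))
                {Z \<in> space (\<nu> (l * (s + t))). Z \<inter> {0..l * s} \<noteq> {} \<and> Z \<inter> {l * s..l * (s + t)} \<noteq> {}})
               \<in> O[at_right 0](\<lambda>l. (l * (s + t))\<^sup>2)"
    and iii: "(\<lambda>l. \<bar>measure (\<nu> (l * (s + t))) {{}}
                     - measure (\<nu> (l * s)) {{}} * measure (\<nu> (l * t)) {{}}\<bar>)
               \<in> O[at_right 0](\<lambda>l. (l * (s + t))\<^sup>2)"
    and iv10: "(\<lambda>l. hell_sq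
                  (restr (\<nu> (l * (s + t)))
                     {Z \<in> space (\<nu> (l * (s + t))). Z \<inter> {0..l * s} \<noteq> {} \<and> Z \<inter> {l * s..l * (s + t)} = {}})
                  (restr (conv_meas \<nu> (l * s) (l * t))
                     {Z \<in> space (\<nu> (l * (s + t))). Z \<inter> {0..l * s} \<noteq> {} \<and> Z \<inter> {l * s..l * (s + t)} = {}}))
               \<in> O[at_right 0](\<lambda>l. (l * (s + t))\<^sup>2)"
    and iv01: "(\<lambda>l. hell_sq
                  (restr (\<nu> (l * (s + t)))
                     {Z \<in> space (\<nu> (l * (s + t))). Z \<inter> {0..l * s} = {} \<and> Z \<inter> {l * s..l * (s + t)} \<noteq> {}})
                  (restr (conv_meas \<nu> (l * s) (l * t))
                     {Z \<in> space (\<nu> (l * (s + t))). Z \<inter> {0..l * s} = {} \<and> Z \<inter> {l * s..l * (s + t)} \<noteq> {}}))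
               \<in> O[at_right 0](\<lambda>l. (l * (s + t))\<^sup>2)"
  shows "(\<lambda>l. 1 - hell_aff (\<nu> (l * (s + t))) (conv_meas \<nu> (l * s) (l * t)))
           \<in> O[at_right 0](\<lambda>l. (l * (s + t))\<^sup>2)"
proof -
  have "(\<lambda>l. (l * s) * (l * t)) \<in> O[at_right 0](\<lambda>l. (l * (s + t))\<^sup>2)"
  proof (intro bigoI[where c = 1] always_eventually allI)
    fix l :: real
    have "\<bar>(l * s) * (l * t)\<bar> = l\<^sup>2 * (s * t)" using s t by (simp add: abs_mult power2_eq_square)
    also have "\<dots> \<le> l\<^sup>2 * (s + t)\<^sup>2"
      using s t by (intro mult_left_mono) (auto simp: power2_eq_square algebra_simps)
    finally show "norm ((l * s) * (l * t)) \<le> 1 * norm ((l * (s + t))\<^sup>2)" by (simp add: power_mult_distrib)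
  qed
  note i12 = landau_o.big_trans[OF landau_o.big_mult[OF i1 i2] this]
  note bound_in_O = sum_in_bigo(1)[OF sum_in_bigo(1)[OF sum_in_bigo(1)[OF sum_in_bigo(1)[OF iii ii] i12] iv10] iv01]
  have scaled: "l > 0 \<Longrightarrow> factorizing_split \<nu> (l * s) (l * t)" for l
    using fam s t by (simp add: factorizing_split_def)
  note bound = factorizing_split.one_minus_hell_aff_conv_meas_le[OF scaled,
      unfolded distrib_left[symmetric]]
  show ?thesis
    by (rule bigo_of_eventually_abs_le[OF _ bound_in_O], rule eventually_mono[OF eventually_at_right_less],
        rule bound)
qed

end
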